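(* Let $n=2m+2$, $\omega=\exp(2\pi i/n)$, and let $S$ and $C$ be real $n\times n$ circulant matrices with first rows $(s_1,\ldots,s_n)$ and $(c_1,\ldots,c_n)$ such that $S$, $S+C$ and $S-C$ are entrywise nonnegative. Let $\sigma_1=(\lambda_1,\ldots,\lambda_n)$ and $\sigma_2=(\beta_1,\ldots,\beta_n)$ be their ordered spectra, $\lambda_k=\sum_{j=1}^n s_j\omega^{(k-1)(j-1)}$ and $\beta_k=\sum_{j=1}^n c_j\omega^{(k-1)(j-1)}$ (so $\sigma_1=(\lambda_1,\lambda_2,\lambda_3,\ldots,\overline{\lambda}_3,\overline{\lambda}_2)$ and similarly for $\sigma_2$). Let $t_1,t_2$ be real numbers with $t_1\ge|t_2|$ and fix a sign $\epsilon\in\{+1,-1\}$. Define $$\sigma_{s,t_1}=(\lambda_1+t_1,\lambda_2,\ldots,\lambda_{m+1},\lambda_{m+2}+\epsilon t_1,\lambda_{m+3},\ldots,\lambda_n),$$ $$\sigma_{c,t_2}=(\beta_1+t_2,\beta_2,\ldots,\beta_{m+1},\beta_{m+2}+\epsilon t_2,\beta_{m+3},\ldots,\beta_n).$$ Then there exists a nonnegative permutative $2n\times 2n$ matrix $M$ whose spectrum (counted with multiplicities) is the concatenated list $\sigma_{s,t_1}\cup\sigma_{c,t_2}$.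
   Context: A circulant matrix with first row $(r_1,\ldots,r_n)$ is the matrix whose $i$-th row is the first row cyclically shifted $i-1$ positions to the right. A matrix is permutative if each of its rows is a permutation of its first row (more precisely, it equals $\tau(\mathbf a)$ for some $\mathbf a$ and some $n$-tuple of permutations $\tau$ with $\tau_1=\mathrm{id}$, the $j$-th row being $(a_{\tau_j(1)},\ldots,a_{\tau_j(n)})$). Nonnegative means entrywise nonnegative. *)

theory Defs
  imports "Jordan_Normal_Form.Char_Poly" "HOL-Combinatorics.Permutations"
begin

text \<open>Indices are 0-based. A first row is a function r :: nat => real, only
  r 0, ..., r (n-1) matter.\<close>

definition circulant :: "nat \<Rightarrow> (nat \<Rightarrow> real) \<Rightarrow> real mat" where
  "circulant n r = mat n n (\<lambda>(i, j). r (nat ((int j - int i) mod int n)))"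

definition nonneg_mat :: "real mat \<Rightarrow> bool" where
  "nonneg_mat M \<longleftrightarrow> (\<forall>i < dim_row M. \<forall>j < dim_col M. M $$ (i, j) \<ge> 0)"

definition permutative :: "real mat \<Rightarrow> bool" where
  "permutative M \<longleftrightarrow> dim_row M = dim_col M \<and>
     (\<forall>i < dim_row M. \<exists>\<tau>. \<tau> permutes {..<dim_col M} \<and> (i = 0 \<longrightarrow> \<tau> = id) \<and>
        (\<forall>k < dim_col M. M $$ (i, k) = M $$ (0, \<tau> k)))"

definition has_spectrum :: "real mat \<Rightarrow> complex list \<Rightarrow> bool" where
  "has_spectrum M xs \<longleftrightarrow>
     char_poly (map_mat complex_of_real M) = (\<Prod>\<mu>\<leftarrow>xs. [:- \<mu>, 1:])"

definition circ_eig :: "nat \<Rightarrow> (nat \<Rightarrow> real) \<Rightarrow> nat \<Rightarrow> complex" where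
  "circ_eig n r k = (\<Sum>j<n. complex_of_real (r j) *
      cis (2 * pi / real n) ^ (k * j))"

end

theory Submission
  imports Defs "HOL-Library.Real_Mod"
begin

text \<open>Put \<phi> l = 1 + \<epsilon> (-1)^l \<ge> 0 and take first rows a = (s + c + (t1 + t2)/n \<phi>)/2 and
  b = (s - c + (t1 - t2)/n \<phi>)/2, which are nonnegative by the hypotheses. The block matrix
  M = [[A, B], [B, A]] of the circulants with these first rows is nonnegative and permutative:
  every row is a cyclic shift of row 0 inside each half, possibly with the halves swapped.
  M is a group matrix of Z_n \<times> Z_2, so its characters diagonalise it and its eigenvalues are
  the circulant eigenvalues of a + b = s + t1/n \<phi> and of a - b = c + t2/n \<phi>. Finally, the
  discrete Fourier transform of \<phi> is n at index 0, \<epsilon> n at index m + 1 and 0 elsewhere, so these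
  are the perturbed spectra.\<close>

definition unit_root :: "nat \<Rightarrow> complex" where
  "unit_root n = cis (2 * pi / real n)"

lemma unit_root_power: "unit_root n ^ p = cis (2 * pi * real p / real n)"
  unfolding unit_root_def DeMoivre by (simp add: field_simps)

lemma unit_root_power_eq_1_iff:
  assumes "0 < n" shows "unit_root n ^ p = 1 \<longleftrightarrow> n dvd p"
proof
  assume "unit_root n ^ p = 1"
  then obtain k where "2 * pi * real p / real n = of_int k * (2 * pi)"
    unfolding unit_root_power cis_eq_1_iff by blast
  hence "real p = of_int k * real n" using assms by (simp add: field_simps)
  hence "int p = k * int n" by (metis of_int_eq_iff of_int_mult of_int_of_nat_eq)
  thus "n dvd p" by (metis dvd_triv_right int_dvd_int_iff)
next
  assume "n dvd p"
  then obtain k where "p = n * k" by blast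
  thus "unit_root n ^ p = 1"
    using assms by (simp add: power_mult unit_root_power)
qed

lemma dvd_iff_eq_if_less_double:
  fixes x n :: nat assumes "0 < x" and "x < 2 * n" shows "n dvd x \<longleftrightarrow> x = n"
proof
  assume "n dvd x"
  then obtain q where q: "x = n * q" by blast
  with assms have "0 < n * q" "n * q < n * 2" by simp_all
  hence "0 < q" "q < 2" using nat_0_less_mult_iff mult_less_cancel1 by blast+
  with q show "x = n" by simp
qed simp

lemma unit_root_power_cong:
  assumes "0 < n" and "p mod n = q mod n"
  shows "unit_root n ^ p = unit_root n ^ q"
proof -
  have period: "unit_root n ^ (n * j + r) = unit_root n ^ r" for j r
    using unit_root_power_eq_1_iff[OF assms(1), of n] by (simp add: power_add power_mult)
  have "unit_root n ^ p = unit_root n ^ (n * (p div n) + p mod n)" by simp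
  also have "\<dots> = unit_root n ^ (n * (q div n) + q mod n)" by (simp only: period assms(2))
  finally show ?thesis by simp
qed

lemma sum_unit_root_powers:
  assumes "0 < n"
  shows "(\<Sum>l<n. unit_root n ^ (p * l)) = (if n dvd p then of_nat n else 0)"
proof (cases "n dvd p")
  case True
  hence "unit_root n ^ p = 1" using unit_root_power_eq_1_iff assms by blast
  thus ?thesis using True by (simp add: power_mult)
next
  case False
  hence ne: "unit_root n ^ p \<noteq> 1" using unit_root_power_eq_1_iff assms by blast
  have "(\<Sum>l<n. unit_root n ^ (p * l)) = ((unit_root n ^ p) ^ n - 1) / (unit_root n ^ p - 1)"
    using geometric_sum[OF ne] by (simp add: power_mult)
  also have "(unit_root n ^ p) ^ n = 1"
    using unit_root_power_eq_1_iff[OF assms] by (simp flip: power_mult)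
  finally show ?thesis using False by simp
qed

lemma unit_root_half_power: "unit_root (2 * m + 2) ^ (m + 1) = -1"
proof -
  have "2 * pi * real (m + 1) / real (2 * m + 2) = pi" by (simp add: field_simps)
  thus ?thesis unfolding unit_root_power by simp
qed

lemma circ_eig_unit_root:
  "circ_eig n r k = (\<Sum>j<n. complex_of_real (r j) * unit_root n ^ (k * j))"
  unfolding circ_eig_def unit_root_def ..

lemma circ_eig_add_scaled:
  "circ_eig n (\<lambda>l. f l + c * g l) k = circ_eig n f k + complex_of_real c * circ_eig n g k"
  unfolding circ_eig_def by (simp add: sum.distrib sum_distrib_left algebra_simps)

lemma circ_eig_alternating:
  assumes "k < 2 * m + 2"
  shows "circ_eig (2 * m + 2) (\<lambda>l. 1 + e * (-1) ^ l) k
     = of_nat (2 * m + 2) * ((if k = 0 then 1 else 0) + of_real e * (if k = m + 1 then 1 else 0))"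
proof -
  let ?n = "2 * m + 2" and ?\<omega> = "unit_root (2 * m + 2)"
  have summand: "complex_of_real (1 + e * (-1) ^ l) * ?\<omega> ^ (k * l)
      = ?\<omega> ^ (k * l) + of_real e * ?\<omega> ^ ((k + (m + 1)) * l)" for l
  proof -
    have shift: "?\<omega> ^ ((k + (m + 1)) * l) = ?\<omega> ^ (k * l) * (-1) ^ l"
      using unit_root_half_power[of m] by (metis add_mult_distrib power_add power_mult)
    show ?thesis unfolding shift by (simp add: algebra_simps)
  qed
  have geo: "(\<Sum>l<?n. ?\<omega> ^ (p * l)) = (if ?n dvd p then of_nat ?n else 0)" for p
    by (rule sum_unit_root_powers) simp
  have dvd_0: "?n dvd k \<longleftrightarrow> k = 0" using assms by (auto dest: dvd_imp_le)
  have dvd_half: "?n dvd (k + (m + 1)) \<longleftrightarrow> k = m + 1"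
    using dvd_iff_eq_if_less_double[of "k + (m + 1)" ?n] assms by simp
  have "circ_eig ?n (\<lambda>l. 1 + e * (-1) ^ l) k
      = (\<Sum>l<?n. ?\<omega> ^ (k * l)) + of_real e * (\<Sum>l<?n. ?\<omega> ^ ((k + (m + 1)) * l))"
    unfolding circ_eig_unit_root summand sum.distrib sum_distrib_left ..
  thus ?thesis unfolding geo dvd_0 dvd_half by simp
qed

lemma circ_eig_alternating_perturbation:
  assumes "k < 2 * m + 2"
  shows "circ_eig (2 * m + 2) (\<lambda>l. r l + t / real (2 * m + 2) * (1 + e * (-1) ^ l)) k
     = circ_eig (2 * m + 2) r k + of_real (if k = 0 then t else if k = m + 1 then e * t else 0)"
proof -
  have scale: "complex_of_real (t / real (2 * m + 2)) * of_nat (2 * m + 2) = of_real t"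
  proof -
    have "t / real (2 * m + 2) * real (2 * m + 2) = t" by simp
    thus ?thesis by (metis of_real_mult of_real_of_nat_eq)
  qed
  have "circ_eig (2 * m + 2) (\<lambda>l. r l + t / real (2 * m + 2) * (1 + e * (-1) ^ l)) k
     = circ_eig (2 * m + 2) r k
       + of_real t * ((if k = 0 then 1 else 0) + of_real e * (if k = m + 1 then 1 else 0))"
    unfolding circ_eig_add_scaled[of _ r] circ_eig_alternating[OF assms] mult.assoc[symmetric] scale ..
  also have "\<dots> = circ_eig (2 * m + 2) r k
       + of_real (if k = 0 then t else if k = m + 1 then e * t else 0)"
    by (cases "k = 0"; cases "k = m + 1") simp_all
  finally show ?thesis .
qed

definition cyc_offset :: "nat \<Rightarrow> nat \<Rightarrow> nat \<Rightarrow> nat" where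
  "cyc_offset n i j = nat ((int j - int i) mod int n)"

lemma cyc_offset_less: "0 < n \<Longrightarrow> cyc_offset n i j < n"
  unfolding cyc_offset_def by (simp add: nat_less_iff)

lemma cyc_offset_add_mod:
  assumes "0 < n" shows "(cyc_offset n i j + i) mod n = j mod n"
proof -
  have "int ((cyc_offset n i j + i) mod n) = ((int j - int i) mod int n + int i) mod int n"
    using assms by (simp add: cyc_offset_def zmod_int)
  also have "\<dots> = int (j mod n)" by (simp add: mod_add_left_eq zmod_int)
  finally show ?thesis by simp
qed

lemma cyc_offset_mod_add: assumes "b < n" shows "cyc_offset n i ((b + i) mod n) = b"
proof -
  have "(int ((b + i) mod n) - int i) mod int n = int b"
    using assms by (simp add: zmod_int mod_diff_left_eq)
  thus ?thesis unfolding cyc_offset_def by simp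
qed

lemma cyc_offset_add_right: "cyc_offset n i (j + n) = cyc_offset n i j"
proof -
  have "int (j + n) - int i = (int j - int i) + int n" by simp
  thus ?thesis unfolding cyc_offset_def by (simp only: mod_add_self2)
qed

lemma cyc_offset_0_left: "cyc_offset n 0 j = j mod n"
  unfolding cyc_offset_def by (simp flip: zmod_int)

lemma circulant_add: "circulant n f + circulant n g = circulant n (\<lambda>l. f l + g l)"
  by (rule eq_matI) (auto simp: circulant_def)

lemma circulant_diff: "circulant n f - circulant n g = circulant n (\<lambda>l. f l - g l)"
  by (rule eq_matI) (auto simp: circulant_def)

lemma nonneg_circulant_first_row:
  assumes "nonneg_mat (circulant n r)" and "l < n"
  shows "0 \<le> r l"
proof -
  have "\<forall>i<n. \<forall>j<n. 0 \<le> r (nat ((int j - int i) mod int n))"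
    using assms(1) by (simp add: nonneg_mat_def circulant_def)
  hence "0 \<le> r (nat (int l mod int n))" using assms(2) by fastforce
  thus ?thesis using assms(2) by (simp flip: zmod_int)
qed

lemma sum_cyc_offset_unit_root:
  assumes n: "0 < n"
  shows "(\<Sum>j<n. f (cyc_offset n i j) * unit_root n ^ (k * j))
       = unit_root n ^ (k * i) * (\<Sum>l<n. f l * unit_root n ^ (k * l))"
proof -
  have "(\<Sum>j<n. f (cyc_offset n i j) * unit_root n ^ (k * j))
      = (\<Sum>l<n. f l * unit_root n ^ (k * ((l + i) mod n)))"
    by (rule sum.reindex_bij_witness[where i = "\<lambda>l. (l + i) mod n" and j = "cyc_offset n i"])
       (use n in \<open>auto simp: cyc_offset_less cyc_offset_add_mod cyc_offset_mod_add\<close>)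
  also have "\<dots> = (\<Sum>l<n. unit_root n ^ (k * i) * (f l * unit_root n ^ (k * l)))"
  proof (rule sum.cong[OF refl])
    fix l
    have "unit_root n ^ (k * ((l + i) mod n)) = unit_root n ^ (k * l + k * i)"
      by (rule unit_root_power_cong[OF n]) (simp add: mod_mult_right_eq distrib_left)
    thus "f l * unit_root n ^ (k * ((l + i) mod n)) = unit_root n ^ (k * i) * (f l * unit_root n ^ (k * l))"
      by (simp add: power_add)
  qed
  finally show ?thesis by (simp add: sum_distrib_left)
qed

definition block_circulant :: "nat \<Rightarrow> (nat \<Rightarrow> real) \<Rightarrow> (nat \<Rightarrow> real) \<Rightarrow> real mat" where
  "block_circulant n a b =
     mat (2 * n) (2 * n) (\<lambda>(i, j). (if (i < n) = (j < n) then a else b) (cyc_offset n i j))"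

lemma block_circulant_carrier: "block_circulant n a b \<in> carrier_mat (2 * n) (2 * n)"
  by (simp add: block_circulant_def)

lemma nonneg_block_circulant:
  assumes "0 < n" and "\<And>l. l < n \<Longrightarrow> 0 \<le> a l" and "\<And>l. l < n \<Longrightarrow> 0 \<le> b l"
  shows "nonneg_mat (block_circulant n a b)"
  using assms cyc_offset_less[OF assms(1)] unfolding nonneg_mat_def block_circulant_def by auto

definition block_shift :: "nat \<Rightarrow> nat \<Rightarrow> nat \<Rightarrow> nat" where
  "block_shift n i k =
     (if k < 2 * n then (if (k < n) = (i < n) then 0 else n) + cyc_offset n i k else k)"

lemma block_shift_0: "0 < n \<Longrightarrow> block_shift n 0 = id"
  by (auto simp: block_shift_def cyc_offset_0_left le_mod_geq)

lemma block_shift_permutes: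
  assumes n: "0 < n" shows "block_shift n i permutes {..<2 * n}"
proof (rule inj_imp_permutes)
  show "inj_on (block_shift n i) {..<2 * n}"
  proof (rule inj_onI)
    fix x y assume "x \<in> {..<2 * n}" "y \<in> {..<2 * n}" and eq: "block_shift n i x = block_shift n i y"
    hence x: "x < 2 * n" and y: "y < 2 * n" by simp_all
    have "(x < n) = (y < n)" and "cyc_offset n i x = cyc_offset n i y"
      using eq x y cyc_offset_less[OF n, of i x] cyc_offset_less[OF n, of i y]
      unfolding block_shift_def by (auto split: if_splits)
    moreover have "x mod n = y mod n"
      using arg_cong[OF \<open>cyc_offset n i x = cyc_offset n i y\<close>, of "\<lambda>c. (c + i) mod n"]
      by (simp add: cyc_offset_add_mod[OF n])
    moreover have "z = (if z < n then 0 else n) + z mod n" if "z < 2 * n" for z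
      using that by (auto simp: le_mod_geq)
    ultimately show "x = y" using x y by metis
  qed
next
  fix k assume "k \<in> {..<2 * n}"
  thus "block_shift n i k \<in> {..<2 * n}"
    using cyc_offset_less[OF n, of i k] by (auto simp: block_shift_def)
qed (auto simp: block_shift_def)

lemma block_circulant_row_shift:
  assumes n: "0 < n" and "i < 2 * n" and "k < 2 * n"
  shows "block_circulant n a b $$ (i, k) = block_circulant n a b $$ (0, block_shift n i k)"
  using assms cyc_offset_less[OF n, of i k]
  by (auto simp: block_circulant_def block_shift_def cyc_offset_0_left)

lemma permutative_block_circulant:
  assumes "0 < n" shows "permutative (block_circulant n a b)"
  unfolding permutative_def
proof (intro conjI allI impI)
  fix i assume "i < dim_row (block_circulant n a b)"
  thus "\<exists>\<tau>. \<tau> permutes {..<dim_col (block_circulant n a b)} \<and> (i = 0 \<longrightarrow> \<tau> = id) \<and>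
          (\<forall>k < dim_col (block_circulant n a b).
             block_circulant n a b $$ (i, k) = block_circulant n a b $$ (0, \<tau> k))"
    using assms block_shift_permutes block_shift_0 block_circulant_row_shift
    by (intro exI[of _ "block_shift n i"]) (auto simp: block_circulant_def)
qed (simp add: block_circulant_def)

lemma sum_lessThan_double: "(\<Sum>j<2 * (n::nat). f j) = (\<Sum>j<n. f j) + (\<Sum>j<n. f (j + n))"
proof -
  have "(\<Sum>j<2 * n. f j) = (\<Sum>j\<in>{0..<n}. f j) + (\<Sum>j\<in>{n..<n + n}. f j)"
    using sum.atLeastLessThan_concat[of 0 n "n + n" f] by (simp add: atLeast0LessThan mult_2)
  also have "(\<Sum>j\<in>{n..<n + n}. f j) = (\<Sum>j\<in>{0..<n}. f (j + n))"
    using sum.shift_bounds_nat_ivl[of f 0 n n] by simp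
  finally show ?thesis by (simp add: atLeast0LessThan)
qed

definition half_sign :: "nat \<Rightarrow> nat \<Rightarrow> real" where
  "half_sign n K = (if n \<le> K then -1 else 1)"

text \<open>Reading j < 2n as the element (j mod n, j div n) of Z_n \<times> Z_2, these are the characters
  j \<mapsto> \<omega>^(k j) \<sigma>^(j div n) with k = K mod n and \<sigma> = half_sign n K.\<close>
definition character :: "nat \<Rightarrow> nat \<Rightarrow> nat \<Rightarrow> complex" where
  "character n K j = unit_root n ^ (K mod n * j) * (if n \<le> j then of_real (half_sign n K) else 1)"

definition character_mat :: "nat \<Rightarrow> complex mat" where
  "character_mat n = mat (2 * n) (2 * n) (\<lambda>(j, K). character n K j)"

text \<open>The complex conjugate of character n K j, since \<omega>^(n - k) = \<omega>^-k.\<close>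
definition dual_character :: "nat \<Rightarrow> nat \<Rightarrow> nat \<Rightarrow> complex" where
  "dual_character n K j =
     unit_root n ^ ((n - K mod n) * j) * (if n \<le> j then of_real (half_sign n K) else 1)"

definition character_mat_inv :: "nat \<Rightarrow> complex mat" where
  "character_mat_inv n = mat (2 * n) (2 * n) (\<lambda>(K, j). dual_character n K j / of_nat (2 * n))"

definition block_circ_eig :: "nat \<Rightarrow> (nat \<Rightarrow> real) \<Rightarrow> (nat \<Rightarrow> real) \<Rightarrow> nat \<Rightarrow> complex" where
  "block_circ_eig n a b K = circ_eig n (\<lambda>l. a l + half_sign n K * b l) (K mod n)"

lemma character_orthogonality:
  assumes n: "0 < n" and K: "K < 2 * n" and L: "L < 2 * n"
  shows "(\<Sum>j<2 * n. dual_character n K j * character n L j) = (if K = L then of_nat (2 * n) else 0)"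
proof -
  define p where "p = n - K mod n + L mod n"
  let ?\<sigma> = "half_sign n K * half_sign n L"
  have power_p: "unit_root n ^ (p * j) = unit_root n ^ ((n - K mod n) * j) * unit_root n ^ (L mod n * j)"
    for j unfolding p_def add_mult_distrib power_add ..
  have first_half: "dual_character n K j * character n L j = unit_root n ^ (p * j)" if "j < n" for j
    using that by (simp add: dual_character_def character_def power_p)
  have second_half: "dual_character n K (j + n) * character n L (j + n) = of_real ?\<sigma> * unit_root n ^ (p * j)"
    for j
  proof -
    have "unit_root n ^ (p * (j + n)) = unit_root n ^ (p * j)"
      by (rule unit_root_power_cong[OF n]) (simp add: algebra_simps)
    thus ?thesis by (simp add: dual_character_def character_def power_p)
  qed
  have "n dvd p \<longleftrightarrow> K mod n = L mod n"
    using dvd_iff_eq_if_less_double[of p n] mod_less_divisor[OF n, of K] mod_less_divisor[OF n, of L]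
    unfolding p_def by linarith
  hence geo: "(\<Sum>j<n. unit_root n ^ (p * j)) = (if K mod n = L mod n then of_nat n else 0)"
    using sum_unit_root_powers[OF n] by simp
  have same: "K = L \<longleftrightarrow> K mod n = L mod n \<and> ?\<sigma> = 1"
  proof -
    have "z = (if n \<le> z then n else 0) + z mod n" if "z < 2 * n" for z
      using that by (auto simp: le_mod_geq)
    thus ?thesis using K L unfolding half_sign_def by (auto, metis)
  qed
  have "(\<Sum>j<2 * n. dual_character n K j * character n L j)
      = (1 + of_real ?\<sigma>) * (\<Sum>j<n. unit_root n ^ (p * j))"
    unfolding sum_lessThan_double
    by (simp add: first_half second_half sum_distrib_left distrib_right sum.distrib del: of_real_mult)
  also have "\<dots> = (if K = L then of_nat (2 * n) else 0)"
    unfolding geo same by (auto simp: half_sign_def)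
  finally show ?thesis .
qed

lemma character_mat_inv_mult:
  assumes "0 < n" shows "character_mat_inv n * character_mat n = 1\<^sub>m (2 * n)"
proof (rule eq_matI)
  fix K L assume "K < dim_row (1\<^sub>m (2 * n))" "L < dim_col (1\<^sub>m (2 * n))"
  hence K: "K < 2 * n" and L: "L < 2 * n" by simp_all
  have "(character_mat_inv n * character_mat n) $$ (K, L)
      = (\<Sum>j<2 * n. dual_character n K j * character n L j) / of_nat (2 * n)"
    using K L by (simp add: character_mat_inv_def character_mat_def scalar_prod_def atLeast0LessThan
        sum_divide_distrib)
  thus "(character_mat_inv n * character_mat n) $$ (K, L) = 1\<^sub>m (2 * n) $$ (K, L)"
    using K L assms by (simp add: character_orthogonality)
qed (simp_all add: character_mat_inv_def character_mat_def)

lemma block_circulant_character: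
  assumes n: "0 < n" and i: "i < 2 * n" and K: "K < 2 * n"
  shows "(\<Sum>j<2 * n. complex_of_real (block_circulant n a b $$ (i, j)) * character n K j)
       = block_circ_eig n a b K * character n K i"
proof -
  let ?k = "K mod n" and ?\<sigma> = "half_sign n K" and ?\<omega> = "unit_root n"
  define f where "f = (if i < n then a else b)"
  define g where "g = (if i < n then b else a)"
  have row: "block_circulant n a b $$ (i, j) = f (cyc_offset n i j)"
    "block_circulant n a b $$ (i, j + n) = g (cyc_offset n i j)" if "j < n" for j
    using that i unfolding block_circulant_def f_def g_def by (auto simp: cyc_offset_add_right)
  have char: "character n K j = ?\<omega> ^ (?k * j)"
    "character n K (j + n) = of_real ?\<sigma> * ?\<omega> ^ (?k * j)" if "j < n" for j
  proof -
    have "?\<omega> ^ (?k * (j + n)) = ?\<omega> ^ (?k * j)"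
      by (rule unit_root_power_cong[OF n]) (simp add: algebra_simps)
    thus "character n K j = ?\<omega> ^ (?k * j)" "character n K (j + n) = of_real ?\<sigma> * ?\<omega> ^ (?k * j)"
      using that by (simp_all add: character_def)
  qed
  have "(\<Sum>j<2 * n. complex_of_real (block_circulant n a b $$ (i, j)) * character n K j)
      = (\<Sum>j<n. complex_of_real ((\<lambda>l. f l + ?\<sigma> * g l) (cyc_offset n i j)) * ?\<omega> ^ (?k * j))"
    unfolding sum_lessThan_double by (simp add: row char sum.distrib[symmetric] algebra_simps)
  also have "\<dots> = ?\<omega> ^ (?k * i) * circ_eig n (\<lambda>l. f l + ?\<sigma> * g l) ?k"
    using sum_cyc_offset_unit_root[OF n, of "\<lambda>l. complex_of_real (f l + ?\<sigma> * g l)"]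
    by (simp add: circ_eig_unit_root)
  also have "\<dots> = block_circ_eig n a b K * character n K i"
  proof (cases "i < n")
    case True
    thus ?thesis by (simp add: f_def g_def block_circ_eig_def character_def)
  next
    case False
    have "?\<sigma> * ?\<sigma> = 1" by (simp add: half_sign_def)
    hence "circ_eig n (\<lambda>l. b l + ?\<sigma> * a l) ?k = of_real ?\<sigma> * circ_eig n (\<lambda>l. a l + ?\<sigma> * b l) ?k"
      unfolding circ_eig_add_scaled by (simp add: algebra_simps flip: of_real_mult)
    thus ?thesis using False by (simp add: f_def g_def block_circ_eig_def character_def)
  qed
  finally show ?thesis .
qed

lemma block_circulant_character_mat:
  assumes "0 < n"
  shows "map_mat complex_of_real (block_circulant n a b) * character_mat n
       = character_mat n * mat (2 * n) (2 * n) (\<lambda>(i, j). if i = j then block_circ_eig n a b i else 0)"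
  (is "_ = _ * ?D")
proof (rule eq_matI)
  fix i K assume "i < dim_row (character_mat n * ?D)" "K < dim_col (character_mat n * ?D)"
  hence i: "i < 2 * n" and K: "K < 2 * n" by (simp_all add: character_mat_def)
  have "(character_mat n * ?D) $$ (i, K) = block_circ_eig n a b K * character n K i"
    using i K by (simp add: character_mat_def scalar_prod_def atLeast0LessThan if_distrib
        sum.delta cong: if_cong)
  thus "(map_mat complex_of_real (block_circulant n a b) * character_mat n) $$ (i, K)
      = (character_mat n * ?D) $$ (i, K)"
    using i K block_circulant_character[OF assms i K]
    by (simp add: block_circulant_def character_mat_def scalar_prod_def atLeast0LessThan)
qed (simp_all add: character_mat_def block_circulant_def)

lemma char_poly_eigenbasis:
  fixes A P Q :: "'a :: field mat"
  assumes A: "A \<in> carrier_mat N N" and P: "P \<in> carrier_mat N N" and Q: "Q \<in> carrier_mat N N"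
    and inv: "Q * P = 1\<^sub>m N"
    and eig: "A * P = P * mat N N (\<lambda>(i, j). if i = j then \<mu> i else 0)"
  shows "char_poly A = (\<Prod>i\<leftarrow>[0..<N]. [:- \<mu> i, 1:])"
proof -
  define D where "D = mat N N (\<lambda>(i, j). if i = j then \<mu> i else 0)"
  have D: "D \<in> carrier_mat N N" by (simp add: D_def)
  have inv': "P * Q = 1\<^sub>m N" by (rule mat_mult_left_right_inverse[OF Q P inv])
  have "A = A * (P * Q)" using A by (simp add: inv')
  also have "\<dots> = P * D * Q" using A P Q eig by (simp add: D_def assoc_mult_mat[symmetric])
  finally have "similar_mat A D"
    unfolding similar_mat_def using similar_mat_witI[OF inv' inv _ A D P Q] by blast
  hence "char_poly A = char_poly D" by (rule char_poly_similar)
  also have "\<dots> = (\<Prod>x\<leftarrow>diag_mat D. [:- x, 1:])"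
    by (rule char_poly_upper_triangular[OF D]) (simp add: upper_triangular_def D_def)
  also have "diag_mat D = map \<mu> [0..<N]" by (simp add: diag_mat_def D_def)
  finally show ?thesis by (simp add: comp_def)
qed

lemma has_spectrum_block_circulant:
  assumes "0 < n"
  shows "has_spectrum (block_circulant n a b)
    (map (circ_eig n (\<lambda>l. a l + b l)) [0..<n] @ map (circ_eig n (\<lambda>l. a l - b l)) [0..<n])"
proof -
  have char_poly: "char_poly (map_mat complex_of_real (block_circulant n a b))
      = (\<Prod>K\<leftarrow>[0..<2 * n]. [:- block_circ_eig n a b K, 1:])"
    by (rule char_poly_eigenbasis[OF _ _ _ character_mat_inv_mult[OF assms]
          block_circulant_character_mat[OF assms]])
       (simp_all add: block_circulant_def character_mat_def character_mat_inv_def)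
  have eigenvalues: "map (block_circ_eig n a b) [0..<2 * n]
      = map (circ_eig n (\<lambda>l. a l + b l)) [0..<n] @ map (circ_eig n (\<lambda>l. a l - b l)) [0..<n]"
  proof -
    have "[0..<2 * n] = [0..<n] @ map (\<lambda>k. k + n) [0..<n]"
      using upt_add_eq_append[of 0 n n] map_add_upt[of n n] by (simp add: mult_2)
    thus ?thesis by (simp add: block_circ_eig_def half_sign_def)
  qed
  show ?thesis
    unfolding has_spectrum_def char_poly eigenvalues[symmetric] map_map comp_def ..
qed

theorem theorem9:
  fixes m :: nat and s c :: "nat \<Rightarrow> real" and t1 t2 \<epsilon> :: real
  defines "n \<equiv> 2 * m + 2"
  assumes "nonneg_mat (circulant n s)"
    and "nonneg_mat (circulant n s + circulant n c)"
    and "nonneg_mat (circulant n s - circulant n c)"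
    and "t1 \<ge> \<bar>t2\<bar>"
    and "\<epsilon> = 1 \<or> \<epsilon> = -1"
  shows "\<exists>M. M \<in> carrier_mat (2 * n) (2 * n) \<and> nonneg_mat M \<and> permutative M \<and>
    has_spectrum M
      (map (\<lambda>k. circ_eig n s k + complex_of_real
                 (if k = 0 then t1 else if k = m + 1 then \<epsilon> * t1 else 0)) [0..<n]
       @ map (\<lambda>k. circ_eig n c k + complex_of_real
                 (if k = 0 then t2 else if k = m + 1 then \<epsilon> * t2 else 0)) [0..<n])"
proof -
  have n: "0 < n" unfolding n_def by simp
  define alt :: "nat \<Rightarrow> real" where "alt l = 1 + \<epsilon> * (-1) ^ l" for l
  define a where "a l = (s l + c l + (t1 + t2) / real n * alt l) / 2" for l
  define b where "b l = (s l - c l + (t1 - t2) / real n * alt l) / 2" for l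
  have "0 \<le> alt l" for l using \<open>\<epsilon> = 1 \<or> \<epsilon> = -1\<close> by (cases "even l") (auto simp: alt_def)
  moreover have "0 \<le> s l + c l" "0 \<le> s l - c l" if "l < n" for l
    using nonneg_circulant_first_row[OF _ that, of "\<lambda>l. s l + c l"]
      nonneg_circulant_first_row[OF _ that, of "\<lambda>l. s l - c l"]
      \<open>nonneg_mat (circulant n s + circulant n c)\<close> \<open>nonneg_mat (circulant n s - circulant n c)\<close>
    by (simp_all add: circulant_add circulant_diff)
  ultimately have "0 \<le> a l" "0 \<le> b l" if "l < n" for l
    using that \<open>t1 \<ge> \<bar>t2\<bar>\<close> n unfolding a_def b_def by simp_all
  hence "nonneg_mat (block_circulant n a b)" by (rule nonneg_block_circulant[OF n])
  have "(\<lambda>l. a l + b l) = (\<lambda>l. s l + t1 / real n * alt l)"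
    and "(\<lambda>l. a l - b l) = (\<lambda>l. c l + t2 / real n * alt l)"
    using n by (simp_all add: fun_eq_iff a_def b_def field_simps)
  hence spectrum: "has_spectrum (block_circulant n a b)
    (map (circ_eig n (\<lambda>l. s l + t1 / real n * alt l)) [0..<n]
     @ map (circ_eig n (\<lambda>l. c l + t2 / real n * alt l)) [0..<n])"
    using has_spectrum_block_circulant[OF n, of a b] by simp
  have perturbation: "map (circ_eig n (\<lambda>l. r l + t / real n * alt l)) [0..<n]
      = map (\<lambda>k. circ_eig n r k + complex_of_real
                 (if k = 0 then t else if k = m + 1 then \<epsilon> * t else 0)) [0..<n]" for r t
    unfolding n_def alt_def by (rule map_cong[OF refl], rule circ_eig_alternating_perturbation) auto
  show ?thesis
    using spectrum \<open>nonneg_mat (block_circulant n a b)\<close> block_circulant_carrier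
      permutative_block_circulant[OF n]
    unfolding perturbation by blast
qed

end
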